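(* If $F$ has a derivative $F'(x_0)$ at a nega-$\tilde Q$-irrational point $x_0=\Delta^{-\tilde Q}_{i_1(x_0)i_2(x_0)\dots}$, then $$F'(x_0)=\lim_{n\to\infty}\prod_{j=1}^{n}\frac{\tilde p_{i_j(x_0),j}}{\tilde q_{i_j(x_0),j}}=\prod_{n=1}^{\infty}\frac{\tilde p_{i_n(x_0),n}}{\tilde q_{i_n(x_0),n}}.$$
   Context: Let $(m_n)_{n\ge1}$ be finite nonnegative integers and $\tilde Q=\|q_{i,n}\|$ ($i\in\{0,\dots,m_n\}$) with $q_{i,n}>0$, $\sum_{i}q_{i,n}=1$ for all $n$, and $\prod_n q_{i_n,n}=0$ for every digit sequence $(i_n)$. Put $a_{0,n}=0$, $a_{i,n}=\sum_{l<i}q_{l,n}$; $\Delta^{\tilde Q}_{j_1j_2\dots}=a_{j_1,1}+\sum_{n\ge2}a_{j_n,n}\prod_{l<n}q_{j_l,l}$. For odd $n$: $\tilde q_{i,n}=q_{i,n}$; for even $n$: $\tilde q_{i,n}=q_{m_n-i,n}$. The nega-$\tilde Q$-representation $x=\Delta^{-\tilde Q}_{i_1i_2\dots}$ means $x=\Delta^{\tilde Q}_{i_1[m_2-i_2]i_3[m_4-i_4]\dots}$; every $x\in[0,1]$ has one; numbers $\Delta^{-\tilde Q}_{i_1\dots i_nm_{n+1}0m_{n+3}0\dots}=\Delta^{-\tilde Q}_{i_1\dots[i_n-1]0m_{n+2}0m_{n+4}\dots}$ ($i_n\ne0$) have two representations and are nega-$\tilde Q$-rational; all other points have a unique representation and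 are nega-$\tilde Q$-irrational. Let $P=\|p_{i,n}\|$ have the same shape with $p_{i,n}\in(-1,1)$, $\sum_ip_{i,n}=1$, $\prod_n|p_{i_n,n}|=0$ for every digit sequence, $0<\sum_{i<c}p_{i,n}<1$ for $c\in\{1,\dots,m_n\}$. Put $\beta_{0,n}=0$, $\beta_{c,n}=\sum_{i<c}p_{i,n}$; for odd $n$: $\tilde p_{i,n}=p_{i,n}$, $\tilde\beta_{i,n}=\beta_{i,n}$; for even $n$: $\tilde p_{i,n}=p_{m_n-i,n}$, $\tilde\beta_{i,n}=\beta_{m_n-i,n}$. $F(x)=\beta_{i_1,1}+\sum_{k\ge2}\tilde\beta_{i_k,k}\prod_{j<k}\tilde p_{i_j,j}$ for $x=\Delta^{-\tilde Q}_{i_1i_2\dots}$. *)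

theory Defs
  imports "HOL-Analysis.Analysis"
begin

text \<open>Matrices are functions q i n (digit i, position n); positions start at n = 1.
  A digit sequence d :: nat => nat is used only at positions n >= 1.\<close>

definition a_coef :: "(nat \<Rightarrow> nat \<Rightarrow> real) \<Rightarrow> nat \<Rightarrow> nat \<Rightarrow> real" where
  "a_coef q i n = (\<Sum>l<i. q l n)"

definition DeltaQ :: "(nat \<Rightarrow> nat \<Rightarrow> real) \<Rightarrow> (nat \<Rightarrow> nat) \<Rightarrow> real" where
  "DeltaQ q d = a_coef q (d 1) 1 +
     (\<Sum>k. a_coef q (d (k+2)) (k+2) * (\<Prod>l\<in>{1..k+1}. q (d l) l))"

definition nega_digits :: "(nat \<Rightarrow> nat) \<Rightarrow> (nat \<Rightarrow> nat) \<Rightarrow> nat \<Rightarrow> nat" where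
  "nega_digits m d n = (if odd n then d n else m n - d n)"

definition is_digit_seq :: "(nat \<Rightarrow> nat) \<Rightarrow> (nat \<Rightarrow> nat) \<Rightarrow> bool" where
  "is_digit_seq m d \<longleftrightarrow> (\<forall>n\<ge>1. d n \<le> m n)"

definition nega_rep :: "(nat \<Rightarrow> nat) \<Rightarrow> (nat \<Rightarrow> nat \<Rightarrow> real) \<Rightarrow> (nat \<Rightarrow> nat) \<Rightarrow> real \<Rightarrow> bool" where
  "nega_rep m q d x \<longleftrightarrow> is_digit_seq m d \<and> x = DeltaQ q (nega_digits m d)"

definition nega_irrational :: "(nat \<Rightarrow> nat) \<Rightarrow> (nat \<Rightarrow> nat \<Rightarrow> real) \<Rightarrow> real \<Rightarrow> bool" where
  "nega_irrational m q x \<longleftrightarrow> x \<in> {0..1} \<and>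
     (\<forall>d d'. nega_rep m q d x \<longrightarrow> nega_rep m q d' x \<longrightarrow> (\<forall>n\<ge>1. d n = d' n))"

definition tilde :: "(nat \<Rightarrow> nat) \<Rightarrow> (nat \<Rightarrow> nat \<Rightarrow> real) \<Rightarrow> nat \<Rightarrow> nat \<Rightarrow> real" where
  "tilde m r i n = (if odd n then r i n else r (m n - i) n)"

definition beta_coef :: "(nat \<Rightarrow> nat \<Rightarrow> real) \<Rightarrow> nat \<Rightarrow> nat \<Rightarrow> real" where
  "beta_coef p c n = (\<Sum>i<c. p i n)"

definition F_fun :: "(nat \<Rightarrow> nat) \<Rightarrow> (nat \<Rightarrow> nat \<Rightarrow> real) \<Rightarrow> (nat \<Rightarrow> nat \<Rightarrow> real) \<Rightarrow> real \<Rightarrow> real" where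
  "F_fun m q p x = (let d = (SOME d. nega_rep m q d x) in
     beta_coef p (d 1) 1 +
     (\<Sum>k. tilde m (beta_coef p) (d (k+2)) (k+2) * (\<Prod>j\<in>{1..k+1}. tilde m p (d j) j)))"

end

theory Submission
  imports Defs
begin

text \<open>Write e for the ordinary digits of x0, so that x0 = Delta^Q e. Its rank-n cylinder is the
  interval [a_n, b_n] with a_n = sum_{k<=n} beta_{e_k,k} prod_{j<k} q_{e_j,j} and
  b_n - a_n = prod_{j<=n} q_{e_j,j}. Since F reads the Q-digits of its argument as P-digits, F(a_n)
  and F(b_n) are the same expressions with p in place of q; this needs F to be well defined at the
  points with two expansions, which holds because both expansions describe the common endpoint of
  two adjacent cylinders and the P-sums agree there. Hence
  (F(b_n) - F(a_n)) / (b_n - a_n) = prod_{j<=n} p_{e_j,j} / q_{e_j,j}, and difference quotients over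
  intervals straddling x0 and shrinking to it converge to F'(x0).\<close>

text \<open>digit_sum q e n and digit_sum q e n + digit_prod q e n are the endpoints of the rank-n
  cylinder of e; with p in place of q they become the values of F at these endpoints.\<close>

definition digit_prod :: "(nat \<Rightarrow> nat \<Rightarrow> real) \<Rightarrow> (nat \<Rightarrow> nat) \<Rightarrow> nat \<Rightarrow> real" where
  "digit_prod r e n = (\<Prod>j\<in>{1..n}. r (e j) j)"

definition digit_sum :: "(nat \<Rightarrow> nat \<Rightarrow> real) \<Rightarrow> (nat \<Rightarrow> nat) \<Rightarrow> nat \<Rightarrow> real" where
  "digit_sum r e n = (\<Sum>k\<in>{1..n}. beta_coef r (e k) k * digit_prod r e (k - 1))"

definition digit_val :: "(nat \<Rightarrow> nat \<Rightarrow> real) \<Rightarrow> (nat \<Rightarrow> nat) \<Rightarrow> real" where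
  "digit_val r e = beta_coef r (e 1) 1 + (\<Sum>k. beta_coef r (e (k+2)) (k+2) * digit_prod r e (k+1))"

definition digit_system :: "(nat \<Rightarrow> nat) \<Rightarrow> (nat \<Rightarrow> nat \<Rightarrow> real) \<Rightarrow> bool" where
  "digit_system m r \<longleftrightarrow>
     (\<forall>n\<ge>1. beta_coef r (Suc (m n)) n = 1 \<and> (\<forall>c\<le>m n. beta_coef r c n \<in> {0..1})) \<and>
     (\<forall>e. is_digit_seq m e \<longrightarrow> digit_prod r e \<longlonglongrightarrow> 0)"

lemma beta_coef_0 [simp]: "beta_coef r 0 n = 0"
  by (simp add: beta_coef_def)

lemma beta_coef_Suc: "beta_coef r (Suc c) n = beta_coef r c n + r c n"
  by (simp add: beta_coef_def)

lemma digit_prod_0 [simp]: "digit_prod r e 0 = 1"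
  by (simp add: digit_prod_def)

lemma digit_prod_Suc [simp]: "digit_prod r e (Suc n) = digit_prod r e n * r (e (Suc n)) (Suc n)"
  by (simp add: digit_prod_def)

lemma digit_sum_0 [simp]: "digit_sum r e 0 = 0"
  by (simp add: digit_sum_def)

lemma digit_sum_Suc [simp]:
  "digit_sum r e (Suc n) = digit_sum r e n + beta_coef r (e (Suc n)) (Suc n) * digit_prod r e n"
  by (simp add: digit_sum_def)

lemma digit_sum_add_prod_Suc:
  "digit_sum r e (Suc n) + digit_prod r e (Suc n) =
     digit_sum r e n + beta_coef r (Suc (e (Suc n))) (Suc n) * digit_prod r e n"
  by (simp add: beta_coef_Suc algebra_simps)

lemma digit_prod_cong: "(\<And>j. 1 \<le> j \<Longrightarrow> j \<le> n \<Longrightarrow> e j = e' j) \<Longrightarrow> digit_prod r e n = digit_prod r e' n"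
  unfolding digit_prod_def by (rule prod.cong) auto

lemma digit_sum_cong:
  assumes "\<And>j. 1 \<le> j \<Longrightarrow> j \<le> n \<Longrightarrow> e j = e' j"
  shows "digit_sum r e n = digit_sum r e' n"
  unfolding digit_sum_def
proof (rule sum.cong)
  fix k assume "k \<in> {1..n}"
  moreover from this have "digit_prod r e (k - 1) = digit_prod r e' (k - 1)"
    using assms by (intro digit_prod_cong) auto
  ultimately show "beta_coef r (e k) k * digit_prod r e (k - 1) = beta_coef r (e' k) k * digit_prod r e' (k - 1)"
    using assms by simp
qed simp

lemma digit_val_cong:
  assumes "\<And>j. 1 \<le> j \<Longrightarrow> e j = e' j"
  shows "digit_val r e = digit_val r e'"
proof -
  have "digit_prod r e (k + 1) = digit_prod r e' (k + 1)" for k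
    using assms by (intro digit_prod_cong) auto
  moreover have "e 1 = e' 1" "e (k + 2) = e' (k + 2)" for k
    using assms by auto
  ultimately show ?thesis
    unfolding digit_val_def by presburger
qed

lemma DeltaQ_eq_digit_val: "DeltaQ q e = digit_val q e"
  by (simp add: DeltaQ_def digit_val_def digit_prod_def a_coef_def beta_coef_def)

lemma tilde_eq_nega_digits: "tilde m r (d j) j = r (nega_digits m d j) j"
  by (simp add: tilde_def nega_digits_def)

lemma F_fun_eq_digit_val: "F_fun m q p x = digit_val p (nega_digits m (SOME d. nega_rep m q d x))"
  by (simp add: F_fun_def Let_def digit_val_def digit_prod_def tilde_eq_nega_digits)
     (simp add: nega_digits_def)

lemma digit_val_eq_lim:
  assumes "digit_sum r e \<longlonglongrightarrow> L"
  shows "digit_val r e = L"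
proof -
  let ?c = "beta_coef r (e 1) 1"
  let ?f = "\<lambda>k. beta_coef r (e (k+2)) (k+2) * digit_prod r e (k+1)"
  have "?c + (\<Sum>k<N. ?f k) = digit_sum r e (Suc N)" for N
    by (induction N) (simp_all add: numeral_2_eq_2)
  then have "(\<lambda>N. ?c + (\<Sum>k<N. ?f k)) \<longlonglongrightarrow> ?c + (L - ?c)"
    using LIMSEQ_Suc[OF assms] by simp
  then have "?f sums (L - ?c)"
    unfolding sums_def by (rule tendsto_add_const_iff[THEN iffD1])
  then show ?thesis
    unfolding digit_val_def by (simp add: sums_unique[symmetric])
qed

lemma digit_system_beta_coef_mem:
  "digit_system m r \<Longrightarrow> 1 \<le> n \<Longrightarrow> c \<le> Suc (m n) \<Longrightarrow> beta_coef r c n \<in> {0..1}"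
  by (auto simp: digit_system_def le_Suc_eq)

lemma digit_system_beta_coef_full: "digit_system m r \<Longrightarrow> 1 \<le> n \<Longrightarrow> beta_coef r (Suc (m n)) n = 1"
  by (simp add: digit_system_def)

lemma digit_system_digit_prod_tendsto:
  "digit_system m r \<Longrightarrow> is_digit_seq m e \<Longrightarrow> digit_prod r e \<longlonglongrightarrow> 0"
  by (simp add: digit_system_def)

lemma digit_systemI:
  assumes sum: "\<forall>n\<ge>1. (\<Sum>i\<le>m n. r i n) = 1"
    and partial: "\<And>n c. 1 \<le> n \<Longrightarrow> c \<in> {1..m n} \<Longrightarrow> beta_coef r c n \<in> {0..1}"
    and prod: "\<And>e. is_digit_seq m e \<Longrightarrow> (\<lambda>n. \<Prod>j\<in>{1..n}. \<bar>r (e j) j\<bar>) \<longlonglongrightarrow> 0"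
  shows "digit_system m r"
  unfolding digit_system_def
proof (intro conjI allI impI)
  fix n :: nat assume "1 \<le> n"
  then show "beta_coef r (Suc (m n)) n = 1"
    using sum by (simp add: beta_coef_def lessThan_Suc_atMost)
next
  fix n c :: nat assume "1 \<le> n" "c \<le> m n"
  then show "beta_coef r c n \<in> {0..1}"
    using partial by (cases "c = 0") auto
next
  fix e assume "is_digit_seq m e"
  then have "(\<lambda>n. \<bar>digit_prod r e n\<bar>) \<longlonglongrightarrow> 0"
    using prod by (simp add: digit_prod_def abs_prod)
  then show "digit_prod r e \<longlonglongrightarrow> 0"
    by (rule tendsto_rabs_zero_iff[THEN iffD1])
qed

lemma digit_sum_mem_segment:
  assumes r: "digit_system m r" and e: "is_digit_seq m e" and "n \<le> N"
  shows "digit_sum r e N \<in> closed_segment (digit_sum r e n) (digit_sum r e n + digit_prod r e n)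
    \<and> digit_sum r e N + digit_prod r e N
        \<in> closed_segment (digit_sum r e n) (digit_sum r e n + digit_prod r e n)"
  using \<open>n \<le> N\<close>
proof (induction N rule: dec_induct)
  case (step N)
  let ?seg = "closed_segment (digit_sum r e n) (digit_sum r e n + digit_prod r e n)"
  have sub: "closed_segment (digit_sum r e N) (digit_sum r e N + digit_prod r e N) \<subseteq> ?seg"
    using step.IH by (intro closed_segment_subset convex_closed_segment) auto
  have mem: "digit_sum r e N + b * digit_prod r e N
      \<in> closed_segment (digit_sum r e N) (digit_sum r e N + digit_prod r e N)" if "b \<in> {0..1}" for b
    using that by (auto simp: in_segment algebra_simps intro!: exI[of _ b])
  have "e (Suc N) \<le> m (Suc N)"
    using e by (simp add: is_digit_seq_def)
  then have "beta_coef r (e (Suc N)) (Suc N) \<in> {0..1}" "beta_coef r (Suc (e (Suc N))) (Suc N) \<in> {0..1}"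
    using digit_system_beta_coef_mem[OF r] by auto
  then show ?case
    unfolding digit_sum_add_prod_Suc using sub mem by auto
qed simp

lemma digit_sum_dist_le:
  assumes "digit_system m r" "is_digit_seq m e" "n \<le> N"
  shows "\<bar>digit_sum r e N - digit_sum r e n\<bar> \<le> \<bar>digit_prod r e n\<bar>"
  using segment_bound1[OF digit_sum_mem_segment[OF assms, THEN conjunct1]] by simp

lemma digit_sum_tendsto_digit_val:
  assumes r: "digit_system m r" and e: "is_digit_seq m e"
  shows "digit_sum r e \<longlonglongrightarrow> digit_val r e"
proof -
  have P: "digit_prod r e \<longlonglongrightarrow> 0"
    using digit_system_digit_prod_tendsto[OF r e] .
  have "Cauchy (digit_sum r e)"
  proof (rule metric_CauchyI)
    fix \<epsilon> :: real assume "0 < \<epsilon>"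
    then obtain M where M: "\<bar>digit_prod r e M\<bar> < \<epsilon> / 2"
      using LIMSEQ_D[OF P, of "\<epsilon> / 2"] by auto
    have "dist (digit_sum r e a) (digit_sum r e b) < \<epsilon>" if "M \<le> a" "M \<le> b" for a b
      using digit_sum_dist_le[OF r e, of M a] digit_sum_dist_le[OF r e, of M b] that M
      by (simp add: dist_real_def)
    then show "\<exists>M. \<forall>a\<ge>M. \<forall>b\<ge>M. dist (digit_sum r e a) (digit_sum r e b) < \<epsilon>"
      by blast
  qed
  then obtain L where "digit_sum r e \<longlonglongrightarrow> L"
    using Cauchy_convergent_iff convergent_def by blast
  with digit_val_eq_lim show ?thesis
    by metis
qed

lemma digit_val_zero_tail:
  assumes "\<And>j. n < j \<Longrightarrow> e j = 0"
  shows "digit_val r e = digit_sum r e n"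
proof (rule digit_val_eq_lim, rule tendsto_eventually, rule eventually_sequentiallyI)
  show "digit_sum r e N = digit_sum r e n" if "n \<le> N" for N
    using that by (induction N rule: dec_induct) (simp_all add: assms)
qed

lemma digit_val_max_tail:
  assumes r: "digit_system m r" and e: "is_digit_seq m e" and tail: "\<And>j. n < j \<Longrightarrow> e j = m j"
  shows "digit_val r e = digit_sum r e n + digit_prod r e n"
proof -
  have "digit_sum r e N + digit_prod r e N = digit_sum r e n + digit_prod r e n" if "n \<le> N" for N
    using that
  proof (induction N rule: dec_induct)
    case (step N)
    then show ?case
      unfolding digit_sum_add_prod_Suc using digit_system_beta_coef_full[OF r] tail by simp
  qed simp
  then have "(\<lambda>N. digit_sum r e N + digit_prod r e N) \<longlonglongrightarrow> digit_sum r e n + digit_prod r e n"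
    by (intro tendsto_eventually eventually_sequentiallyI)
  moreover have "(\<lambda>N. digit_sum r e N + digit_prod r e N) \<longlonglongrightarrow> digit_val r e + 0"
    using digit_sum_tendsto_digit_val[OF r e] digit_system_digit_prod_tendsto[OF r e]
    by (rule tendsto_add)
  ultimately show ?thesis
    using LIMSEQ_unique by fastforce
qed

lemma digit_sum_eq_digit_val_truncate:
  "digit_sum r e n = digit_val r (\<lambda>j. if j \<le> n then e j else 0)"
  by (subst digit_val_zero_tail[of n]) (auto intro: digit_sum_cong)

lemma digit_sum_add_prod_eq_digit_val_truncate:
  assumes "digit_system m r" "is_digit_seq m e"
  shows "digit_sum r e n + digit_prod r e n = digit_val r (\<lambda>j. if j \<le> n then e j else m j)"
    (is "_ = digit_val r ?h")
proof -
  have "is_digit_seq m ?h"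
    using assms(2) by (simp add: is_digit_seq_def)
  moreover have "digit_sum r ?h n = digit_sum r e n" "digit_prod r ?h n = digit_prod r e n"
    by (auto intro: digit_sum_cong digit_prod_cong)
  ultimately show ?thesis
    using digit_val_max_tail[OF assms(1), of ?h n] by simp
qed

lemma straddle_difference_quotients_tendsto:
  fixes f :: "real \<Rightarrow> real"
  assumes f': "(f has_real_derivative D) (at x within S)"
    and ab: "\<And>n. a n \<le> x \<and> x \<le> b n \<and> a n < b n \<and> a n \<in> S \<and> b n \<in> S"
    and shrink: "(\<lambda>n. b n - a n) \<longlonglongrightarrow> 0"
  shows "(\<lambda>n. (f (b n) - f (a n)) / (b n - a n)) \<longlonglongrightarrow> D"
proof (rule LIMSEQ_I)
  fix \<epsilon> :: real assume "0 < \<epsilon>"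
  have "(f has_derivative (\<lambda>h. D * h)) (at x within S)"
    using f' by (simp add: has_field_derivative_def)
  then obtain \<delta> where "\<delta> > 0" and \<delta>: "\<forall>y\<in>S. norm (y - x) < \<delta> \<longrightarrow>
      norm (f y - f x - D * (y - x)) \<le> \<epsilon> / 2 * norm (y - x)"
    unfolding has_derivative_within_alt using \<open>0 < \<epsilon>\<close> by (meson half_gt_zero)
  obtain N where N: "\<And>n. n \<ge> N \<Longrightarrow> \<bar>b n - a n\<bar> < \<delta>"
    using LIMSEQ_D[OF shrink \<open>\<delta> > 0\<close>] by auto
  have "\<bar>(f (b n) - f (a n)) / (b n - a n) - D\<bar> < \<epsilon>" if "n \<ge> N" for n
  proof -
    have n: "a n \<le> x" "x \<le> b n" "a n < b n" "a n \<in> S" "b n \<in> S" "b n - a n < \<delta>"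
      using ab N[OF that] by (auto simp: abs_less_iff)
    have bounds: "\<bar>f (b n) - f x - D * (b n - x)\<bar> \<le> \<epsilon> / 2 * (b n - x)"
      "\<bar>f (a n) - f x - D * (a n - x)\<bar> \<le> \<epsilon> / 2 * (x - a n)"
      using \<delta> n by auto
    have "\<bar>f (b n) - f (a n) - D * (b n - a n)\<bar>
        = \<bar>(f (b n) - f x - D * (b n - x)) - (f (a n) - f x - D * (a n - x))\<bar>"
      by (simp add: algebra_simps)
    also have "\<dots> \<le> \<epsilon> / 2 * (b n - x) + \<epsilon> / 2 * (x - a n)"
      by (rule order_trans[OF abs_triangle_ineq4 add_mono[OF bounds]])
    also have "\<dots> = \<epsilon> / 2 * (b n - a n)"
      by (simp flip: distrib_left)
    also have "\<dots> < \<epsilon> * (b n - a n)"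
      using \<open>0 < \<epsilon>\<close> n by simp
    finally have "\<bar>f (b n) - f (a n) - D * (b n - a n)\<bar> < \<epsilon> * (b n - a n)" .
    moreover have "(f (b n) - f (a n)) / (b n - a n) - D = (f (b n) - f (a n) - D * (b n - a n)) / (b n - a n)"
      using n by (simp add: field_simps)
    ultimately show ?thesis
      using n by (simp add: abs_divide pos_divide_less_eq)
  qed
  then show "\<exists>N. \<forall>n\<ge>N. norm ((f (b n) - f (a n)) / (b n - a n) - D) < \<epsilon>"
    by auto
qed

locale positive_digit_system =
  fixes m :: "nat \<Rightarrow> nat" and q :: "nat \<Rightarrow> nat \<Rightarrow> real"
  assumes digit_system: "digit_system m q"
    and positive: "\<And>n i. 1 \<le> n \<Longrightarrow> i \<le> m n \<Longrightarrow> 0 < q i n"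
begin

lemma beta_coef_strict_mono: "1 \<le> n \<Longrightarrow> strict_mono_on {..Suc (m n)} (\<lambda>c. beta_coef q c n)"
proof (rule strict_mono_onI)
  fix c c' assume "1 \<le> n" "c' \<in> {..Suc (m n)}" "c < c'"
  then show "beta_coef q c n < beta_coef q c' n"
  proof (induction c')
    case (Suc c')
    then have "beta_coef q c n \<le> beta_coef q c' n" "0 < q c' n"
      using positive by (auto simp: less_Suc_eq)
    then show ?case
      by (simp add: beta_coef_Suc)
  qed simp
qed

lemma digit_prod_pos: "is_digit_seq m e \<Longrightarrow> 0 < digit_prod q e n"
  unfolding digit_prod_def is_digit_seq_def using positive by (intro prod_pos) auto

lemma digit_val_mem_cylinder:
  assumes e: "is_digit_seq m e"
  shows "digit_val q e \<in> {digit_sum q e n .. digit_sum q e n + digit_prod q e n}"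
proof (rule Lim_in_closed_set)
  have "digit_sum q e N \<in> {digit_sum q e n .. digit_sum q e n + digit_prod q e n}" if "n \<le> N" for N
    using digit_sum_mem_segment[OF digit_system e that] digit_prod_pos[OF e, of n]
    by (simp add: closed_segment_eq_real_ivl)
  then show "\<forall>\<^sub>F N in sequentially. digit_sum q e N \<in> {digit_sum q e n .. digit_sum q e n + digit_prod q e n}"
    by (rule eventually_sequentiallyI)
qed (simp_all add: digit_sum_tendsto_digit_val[OF digit_system e])

lemma digit_val_mem_unit: "is_digit_seq m e \<Longrightarrow> digit_val q e \<in> {0..1}"
  using digit_val_mem_cylinder[of e 0] by simp

lemma digit_tail_max_of_right_end:
  assumes e: "is_digit_seq m e" and x: "digit_val q e = digit_sum q e k + digit_prod q e k"
    and "k < j"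
  shows "e j = m j"
proof -
  have next_digit: "e (Suc N) = m (Suc N) \<and> digit_sum q e (Suc N) + digit_prod q e (Suc N) = digit_val q e"
    if N: "digit_sum q e N + digit_prod q e N = digit_val q e" for N
  proof -
    have le: "e (Suc N) \<le> m (Suc N)"
      using e by (simp add: is_digit_seq_def)
    have "digit_val q e \<le> digit_sum q e N + beta_coef q (Suc (e (Suc N))) (Suc N) * digit_prod q e N"
      using digit_val_mem_cylinder[OF e, of "Suc N"] by (simp add: digit_sum_add_prod_Suc[symmetric])
    then have "digit_prod q e N \<le> beta_coef q (Suc (e (Suc N))) (Suc N) * digit_prod q e N"
      using N by linarith
    then have "1 \<le> beta_coef q (Suc (e (Suc N))) (Suc N)"
      using digit_prod_pos[OF e, of N] by (simp add: mult_le_cancel_right1)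
    then have "\<not> e (Suc N) < m (Suc N)"
      using strict_mono_onD[OF beta_coef_strict_mono, of "Suc N" "Suc (e (Suc N))" "Suc (m (Suc N))"]
        digit_system_beta_coef_full[OF digit_system, of "Suc N"] by auto
    then show ?thesis
      unfolding digit_sum_add_prod_Suc
      using le N digit_system_beta_coef_full[OF digit_system, of "Suc N"] by simp
  qed
  have invariant: "digit_sum q e N + digit_prod q e N = digit_val q e" if "k \<le> N" for N
    using that
  proof (induction N rule: dec_induct)
    case (step N)
    show ?case
      using next_digit[OF step.IH] by blast
  qed (use x in simp)
  obtain N where "j = Suc N" "k \<le> N"
    using \<open>k < j\<close> by (cases j) auto
  then show ?thesis
    using next_digit[OF invariant] by simp
qed

lemma digit_tail_zero_of_left_end:
  assumes e: "is_digit_seq m e" and x: "digit_val q e = digit_sum q e k" and "k < j"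
  shows "e j = 0"
proof -
  have next_digit: "e (Suc N) = 0 \<and> digit_sum q e (Suc N) = digit_val q e"
    if N: "digit_sum q e N = digit_val q e" for N
  proof -
    have "digit_sum q e (Suc N) \<le> digit_val q e"
      using digit_val_mem_cylinder[OF e, of "Suc N"] by simp
    then have "beta_coef q (e (Suc N)) (Suc N) \<le> 0"
      using N digit_prod_pos[OF e, of N] by (simp add: mult_le_0_iff)
    moreover have "e (Suc N) \<le> Suc (m (Suc N))"
      using e by (simp add: is_digit_seq_def le_SucI)
    ultimately have "\<not> 0 < e (Suc N)"
      using strict_mono_onD[OF beta_coef_strict_mono, of "Suc N" 0 "e (Suc N)"] by auto
    then show ?thesis
      using N by simp
  qed
  have invariant: "digit_sum q e N = digit_val q e" if "k \<le> N" for N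
    using that
  proof (induction N rule: dec_induct)
    case (step N)
    show ?case
      using next_digit[OF step.IH] by blast
  qed (use x in simp)
  obtain N where "j = Suc N" "k \<le> N"
    using \<open>k < j\<close> by (cases j) auto
  then show ?thesis
    using next_digit[OF invariant] by simp
qed

text \<open>Two expansions of one point that first differ at position k describe the common endpoint of
  adjacent rank-k cylinders: e continues with maximal digits, e' with zeros, and e' k = e k + 1.
  The p-values of such a pair agree because the p-partial sums of a row add up to 1.\<close>

lemma digit_val_eq_at_first_difference:
  assumes p: "digit_system m p" and e: "is_digit_seq m e" and e': "is_digit_seq m e'"
    and x: "digit_val q e = digit_val q e'"
    and agree: "\<And>j. 1 \<le> j \<Longrightarrow> j \<le> k0 \<Longrightarrow> e j = e' j" and less: "e (Suc k0) < e' (Suc k0)"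
  shows "digit_val p e = digit_val p e'"
proof -
  define k where "k = Suc k0"
  have k1: "1 \<le> k"
    by (simp add: k_def)
  have S: "digit_sum r e k0 = digit_sum r e' k0" and P: "digit_prod r e k0 = digit_prod r e' k0" for r
    using agree by (auto intro: digit_sum_cong digit_prod_cong)
  have digits: "Suc (e k) \<in> {..Suc (m k)}" "e' k \<in> {..Suc (m k)}"
    using e e' by (auto simp: is_digit_seq_def k_def intro: le_SucI)
  have right: "digit_sum r e k + digit_prod r e k
      = digit_sum r e k0 + beta_coef r (Suc (e k)) k * digit_prod r e k0" for r
    by (simp only: k_def digit_sum_add_prod_Suc)
  have left: "digit_sum r e' k = digit_sum r e k0 + beta_coef r (e' k) k * digit_prod r e k0" for r
    by (simp add: k_def S P)
  have "beta_coef q (Suc (e k)) k * digit_prod q e k0 \<le> beta_coef q (e' k) k * digit_prod q e k0"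
    using strict_mono_on_leD[OF beta_coef_strict_mono[OF k1] digits] less digit_prod_pos[OF e, of k0]
    by (simp add: k_def)
  moreover have "digit_val q e \<le> digit_sum q e k + digit_prod q e k" "digit_sum q e' k \<le> digit_val q e'"
    using digit_val_mem_cylinder[OF e, of k] digit_val_mem_cylinder[OF e', of k] by auto
  ultimately have right_end: "digit_val q e = digit_sum q e k + digit_prod q e k"
    and left_end: "digit_val q e' = digit_sum q e' k"
    and "beta_coef q (Suc (e k)) k * digit_prod q e k0 = beta_coef q (e' k) k * digit_prod q e k0"
    using x unfolding right left by linarith+
  then have "beta_coef q (Suc (e k)) k = beta_coef q (e' k) k"
    using digit_prod_pos[OF e, of k0] by simp
  then have "e' k = Suc (e k)"
    by (rule strict_mono_on_eqD[OF beta_coef_strict_mono[OF k1] _ digits])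
  have "digit_val p e = digit_sum p e k + digit_prod p e k"
    using digit_val_max_tail[OF p e] digit_tail_max_of_right_end[OF e right_end] by blast
  also have "\<dots> = digit_sum p e' k"
    unfolding right left \<open>e' k = Suc (e k)\<close> ..
  also have "\<dots> = digit_val p e'"
    using digit_val_zero_tail digit_tail_zero_of_left_end[OF e' left_end] by metis
  finally show ?thesis .
qed

lemma digit_val_eq_if_digit_val_eq:
  assumes p: "digit_system m p" and e: "is_digit_seq m e" and e': "is_digit_seq m e'"
    and x: "digit_val q e = digit_val q e'"
  shows "digit_val p e = digit_val p e'"
proof (cases "\<forall>j\<ge>1. e j = e' j")
  case True
  then show ?thesis
    by (intro digit_val_cong) auto
next
  case False
  define k where "k = (LEAST j. 1 \<le> j \<and> e j \<noteq> e' j)"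
  have k: "1 \<le> k" "e k \<noteq> e' k"
    using LeastI_ex[of "\<lambda>j. 1 \<le> j \<and> e j \<noteq> e' j"] False unfolding k_def by auto
  have agree: "e j = e' j" if "1 \<le> j" "j \<le> k - 1" for j
    using not_less_Least[of j "\<lambda>j. 1 \<le> j \<and> e j \<noteq> e' j"] that k unfolding k_def by fastforce
  have "Suc (k - 1) = k"
    using k by simp
  then consider "e (Suc (k - 1)) < e' (Suc (k - 1))" | "e' (Suc (k - 1)) < e (Suc (k - 1))"
    using k by (metis linorder_neqE_nat)
  then show ?thesis
    using digit_val_eq_at_first_difference[OF p e e' x agree]
      digit_val_eq_at_first_difference[OF p e' e x[symmetric] agree[symmetric]]
    by cases auto
qed

lemma F_fun_digit_val:
  assumes p: "digit_system m p" and e: "is_digit_seq m e"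
  shows "F_fun m q p (digit_val q e) = digit_val p e"
proof -
  let ?x = "digit_val q e"
  have involution: "nega_digits m (nega_digits m e) j = e j" if "1 \<le> j" for j
    using e that by (simp add: nega_digits_def is_digit_seq_def)
  have nega_digit_seq: "is_digit_seq m (nega_digits m d)" if "is_digit_seq m d" for d
    using that by (simp add: nega_digits_def is_digit_seq_def)
  have "nega_rep m q (nega_digits m e) ?x"
    unfolding nega_rep_def DeltaQ_eq_digit_val
    using nega_digit_seq[OF e] digit_val_cong[OF involution] by simp
  then have "nega_rep m q (SOME d. nega_rep m q d ?x) ?x"
    by (rule someI[where P = "\<lambda>d. nega_rep m q d ?x"])
  then have "is_digit_seq m (nega_digits m (SOME d. nega_rep m q d ?x))"
    and "digit_val q (nega_digits m (SOME d. nega_rep m q d ?x)) = ?x"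
    by (auto simp: nega_rep_def DeltaQ_eq_digit_val intro: nega_digit_seq)
  then show ?thesis
    unfolding F_fun_eq_digit_val using digit_val_eq_if_digit_val_eq[OF p _ e] by blast
qed

lemma F_fun_cylinder_ends:
  assumes p: "digit_system m p" and e: "is_digit_seq m e"
  shows "F_fun m q p (digit_sum q e n) = digit_sum p e n"
    and "F_fun m q p (digit_sum q e n + digit_prod q e n) = digit_sum p e n + digit_prod p e n"
    and "digit_sum q e n \<in> {0..1}" and "digit_sum q e n + digit_prod q e n \<in> {0..1}"
proof -
  have lo: "is_digit_seq m (\<lambda>j. if j \<le> n then e j else 0)"
    and hi: "is_digit_seq m (\<lambda>j. if j \<le> n then e j else m j)"
    using e by (auto simp: is_digit_seq_def)
  show "F_fun m q p (digit_sum q e n) = digit_sum p e n" "digit_sum q e n \<in> {0..1}"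
    unfolding digit_sum_eq_digit_val_truncate
    using F_fun_digit_val[OF p lo] digit_val_mem_unit[OF lo] by simp_all
  show "F_fun m q p (digit_sum q e n + digit_prod q e n) = digit_sum p e n + digit_prod p e n"
    "digit_sum q e n + digit_prod q e n \<in> {0..1}"
    unfolding digit_sum_add_prod_eq_digit_val_truncate[OF digit_system e]
      digit_sum_add_prod_eq_digit_val_truncate[OF p e]
    using F_fun_digit_val[OF p hi] digit_val_mem_unit[OF hi] by simp_all
qed

end

lemma positive_digit_systemI:
  assumes q_pos: "\<forall>n\<ge>1. \<forall>i\<le>m n. q i n > 0"
    and q_sum: "\<forall>n\<ge>1. (\<Sum>i\<le>m n. q i n) = 1"
    and q_prod: "\<forall>e. is_digit_seq m e \<longrightarrow> (\<lambda>n. \<Prod>j\<in>{1..n}. q (e j) j) \<longlonglongrightarrow> 0"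
  shows "positive_digit_system m q"
proof -
  have q_partial: "beta_coef q c n \<in> {0..1}" if "1 \<le> n" "c \<in> {1..m n}" for n c
  proof -
    have "beta_coef q c n \<le> (\<Sum>i\<le>m n. q i n)"
      unfolding beta_coef_def using q_pos that by (intro sum_mono2) (auto intro: less_imp_le)
    moreover have "0 \<le> beta_coef q c n"
      unfolding beta_coef_def using q_pos that by (intro sum_nonneg) (auto intro: less_imp_le)
    ultimately show ?thesis
      using q_sum that by simp
  qed
  have "digit_system m q"
  proof (rule digit_systemI)
    fix e assume e: "is_digit_seq m e"
    have "(\<Prod>j\<in>{1..n}. \<bar>q (e j) j\<bar>) = (\<Prod>j\<in>{1..n}. q (e j) j)" for n
      using e q_pos unfolding is_digit_seq_def by (intro prod.cong refl abs_of_pos) auto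
    then show "(\<lambda>n. \<Prod>j\<in>{1..n}. \<bar>q (e j) j\<bar>) \<longlonglongrightarrow> 0"
      using q_prod e by simp
  qed (use q_sum q_partial in auto)
  then show ?thesis
    using q_pos by unfold_locales auto
qed

theorem mainTheorem8:
  fixes m :: "nat \<Rightarrow> nat" and q p :: "nat \<Rightarrow> nat \<Rightarrow> real"
    and x0 D :: real and d :: "nat \<Rightarrow> nat"
  assumes q_pos: "\<forall>n\<ge>1. \<forall>i\<le>m n. q i n > 0"
    and q_sum: "\<forall>n\<ge>1. (\<Sum>i\<le>m n. q i n) = 1"
    and q_prod: "\<forall>e. is_digit_seq m e \<longrightarrow> (\<lambda>n. \<Prod>j\<in>{1..n}. q (e j) j) \<longlonglongrightarrow> 0"
    and p_bnd: "\<forall>n\<ge>1. \<forall>i\<le>m n. -1 < p i n \<and> p i n < 1"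
    and p_sum: "\<forall>n\<ge>1. (\<Sum>i\<le>m n. p i n) = 1"
    and p_prod: "\<forall>e. is_digit_seq m e \<longrightarrow> (\<lambda>n. \<Prod>j\<in>{1..n}. \<bar>p (e j) j\<bar>) \<longlonglongrightarrow> 0"
    and p_partial: "\<forall>n\<ge>1. \<forall>c\<in>{1..m n}. 0 < (\<Sum>i<c. p i n) \<and> (\<Sum>i<c. p i n) < 1"
    and irr: "nega_irrational m q x0"
    and rep: "nega_rep m q d x0"
    and deriv: "(F_fun m q p has_real_derivative D) (at x0 within {0..1})"
  shows "(\<lambda>n. \<Prod>j\<in>{1..n}. tilde m p (d j) j / tilde m q (d j) j) \<longlonglongrightarrow> D"
proof -
  interpret positive_digit_system m q
    using q_pos q_sum q_prod by (rule positive_digit_systemI)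
  have p: "digit_system m p"
    using p_sum p_partial p_prod by (intro digit_systemI) (auto simp: beta_coef_def less_imp_le)
  define e where "e = nega_digits m d"
  have e: "is_digit_seq m e"
    using rep by (auto simp: e_def nega_rep_def is_digit_seq_def nega_digits_def)
  have x0: "x0 = digit_val q e"
    using rep by (simp add: e_def nega_rep_def DeltaQ_eq_digit_val)
  let ?a = "digit_sum q e" and ?b = "\<lambda>n. digit_sum q e n + digit_prod q e n"
  have "(\<lambda>n. (F_fun m q p (?b n) - F_fun m q p (?a n)) / (?b n - ?a n)) \<longlonglongrightarrow> D"
    using digit_val_mem_cylinder[OF e] digit_prod_pos[OF e] F_fun_cylinder_ends(3,4)[OF p e]
      digit_system_digit_prod_tendsto[OF digit_system e]
    by (intro straddle_difference_quotients_tendsto[OF deriv]) (auto simp: x0)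
  moreover have "(F_fun m q p (?b n) - F_fun m q p (?a n)) / (?b n - ?a n)
      = (\<Prod>j\<in>{1..n}. tilde m p (d j) j / tilde m q (d j) j)" for n
    unfolding F_fun_cylinder_ends(1,2)[OF p e] tilde_eq_nega_digits
    by (simp add: digit_prod_def prod_dividef e_def)
  ultimately show ?thesis
    by simp
qed

end
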